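(* Let $A\subseteq\mathbb Z_+^2$ be finite and $k\ge0$ an integer. Then $$|\pi_x(A_{>k})|+|\pi_y(A_{>k})|\le\Big(1+\frac1{k+1}\Big)|A_{>k}|.$$
   Context: $\mathbb Z_+=\{0,1,2,\dots\}$. $\mathrm{row}(x,A)$ (resp. $\mathrm{col}(x,A)$) is the number of points of $A$ on the horizontal (resp. vertical) line through $x$ (counting $x$ itself if $x\in A$). $A_{>k}=\{x\in A:\mathrm{row}(x,A)>k\text{ or }\mathrm{col}(x,A)>k\}$. $\pi_x,\pi_y$ denote projections onto the horizontal and vertical axes. *)

theory Defs
  imports Complex_Main
begin

text \<open>Points of Z_+^2 are pairs of naturals (first = horizontal coordinate x, second = vertical y).\<close>

definition row :: "nat \<times> nat \<Rightarrow> (nat \<times> nat) set \<Rightarrow> nat" where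
  "row p A = card {q \<in> A. snd q = snd p}"

definition col :: "nat \<times> nat \<Rightarrow> (nat \<times> nat) set \<Rightarrow> nat" where
  "col p A = card {q \<in> A. fst q = fst p}"

definition A_gt :: "(nat \<times> nat) set \<Rightarrow> nat \<Rightarrow> (nat \<times> nat) set" where
  "A_gt A k = {p \<in> A. row p A > k \<or> col p A > k}"

end

theory Submission
  imports Defs
begin

text \<open>Count each projection as a sum over the points of \<open>B = A\<^sub>>\<^sub>k\<close>: a point contributes the
  reciprocal of the size of its column (resp. row) in \<open>B\<close>. Every point of \<open>B\<close> lies on a line
  that is entirely contained in \<open>B\<close> and has more than \<open>k\<close> points, so one of its two
  contributions is at most \<open>1/(k+1)\<close> and the other at most \<open>1\<close>.\<close>

lemma card_image_eq_sum_inverse_card_fibre: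
  fixes h :: "'a \<Rightarrow> 'b"
  assumes "finite B"
  shows "real (card (h ` B)) = (\<Sum>p\<in>B. 1 / real (card {q\<in>B. h q = h p}))"
proof -
  have "(\<Sum>p\<in>B. 1 / real (card {q\<in>B. h q = h p}))
      = (\<Sum>y\<in>h ` B. \<Sum>p\<in>{x\<in>B. h x = y}. 1 / real (card {q\<in>B. h q = h p}))"
    by (rule sum.image_gen[OF assms])
  also have "\<dots> = (\<Sum>y\<in>h ` B. \<Sum>p\<in>{x\<in>B. h x = y}. 1 / real (card {q\<in>B. h q = y}))"
    by (intro sum.cong) auto
  also have "\<dots> = (\<Sum>y\<in>h ` B. 1)"
  proof (rule sum.cong[OF refl])
    fix y assume "y \<in> h ` B"
    then have "card {q\<in>B. h q = y} > 0"
      using assms by (auto simp: card_gt_0_iff)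
    then show "(\<Sum>p\<in>{x\<in>B. h x = y}. 1 / real (card {q\<in>B. h q = y})) = 1"
      by simp
  qed
  finally show ?thesis by simp
qed

lemma inverse_card_fibre_le_one:
  assumes "finite B" and "p \<in> B"
  shows "1 / real (card {q\<in>B. h q = h p}) \<le> 1"
proof -
  have "card {q\<in>B. h q = h p} > 0"
    using assms by (auto simp: card_gt_0_iff)
  then show ?thesis by simp
qed

lemma finite_A_gt: "finite A \<Longrightarrow> finite (A_gt A k)"
  unfolding A_gt_def by simp

lemma card_row_A_gt:
  assumes "k < row p A"
  shows "k < card {q\<in>A_gt A k. snd q = snd p}"
proof -
  have "{q\<in>A_gt A k. snd q = snd p} = {q\<in>A. snd q = snd p}"
    using assms unfolding A_gt_def row_def by auto
  then show ?thesis using assms unfolding row_def by simp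
qed

lemma card_col_A_gt:
  assumes "k < col p A"
  shows "k < card {q\<in>A_gt A k. fst q = fst p}"
proof -
  have "{q\<in>A_gt A k. fst q = fst p} = {q\<in>A. fst q = fst p}"
    using assms unfolding A_gt_def col_def by auto
  then show ?thesis using assms unfolding col_def by simp
qed

lemma one_div_le_one_div_Suc:
  assumes "k < n"
  shows "1 / real n \<le> 1 / (real k + 1)"
  using assms by (intro divide_left_mono) auto

lemma inverse_card_row_plus_col_A_gt_le:
  assumes "finite A" and p: "p \<in> A_gt A k"
  shows "1 / real (card {q\<in>A_gt A k. fst q = fst p}) + 1 / real (card {q\<in>A_gt A k. snd q = snd p})
         \<le> 1 + 1 / (real k + 1)"
proof -
  have fin: "finite (A_gt A k)" using assms(1) by (rule finite_A_gt)
  have "k < row p A \<or> k < col p A"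
    using p unfolding A_gt_def by auto
  then consider "k < card {q\<in>A_gt A k. snd q = snd p}" | "k < card {q\<in>A_gt A k. fst q = fst p}"
    using card_row_A_gt card_col_A_gt by blast
  then show ?thesis
    using one_div_le_one_div_Suc
      inverse_card_fibre_le_one[OF fin p, of fst] inverse_card_fibre_le_one[OF fin p, of snd]
    by cases (fastforce intro: add_mono)+
qed

theorem mainTheorem13:
  fixes A :: "(nat \<times> nat) set" and k :: nat
  assumes "finite A"
  shows "real (card (fst ` A_gt A k)) + real (card (snd ` A_gt A k))
           \<le> (1 + 1 / (real k + 1)) * real (card (A_gt A k))"
proof -
  let ?B = "A_gt A k"
  have fin: "finite ?B" using assms by (rule finite_A_gt)
  have "real (card (fst ` ?B)) + real (card (snd ` ?B))
     = (\<Sum>p\<in>?B. 1 / real (card {q\<in>?B. fst q = fst p}) + 1 / real (card {q\<in>?B. snd q = snd p}))"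
    by (simp add: card_image_eq_sum_inverse_card_fibre[OF fin] sum.distrib)
  also have "\<dots> \<le> (\<Sum>p\<in>?B. 1 + 1 / (real k + 1))"
    by (rule sum_mono) (rule inverse_card_row_plus_col_A_gt_le[OF assms])
  also have "\<dots> = (1 + 1 / (real k + 1)) * real (card ?B)" by simp
  finally show ?thesis .
qed

end
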